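(* Let $\alpha\ge0$ and $\epsilon\ge0$, and let $P=\{p_0,p_1,\dots,p_k\}\subset\mathbb R^n$ satisfy $\|p_i-p_j\|\le\epsilon\alpha$ for all $i,j$. Then $$\mathrm{CH}\Big(\bigcup_{0\le i\le k}B(p_i;\alpha)\Big)\subseteq\bigcup_{0\le i\le k}B\Big(p_i;\alpha\sqrt{1+\tfrac{\epsilon^2}{2}}\Big).$$
   Context: $B(p;r)$ denotes the open Euclidean ball of radius $r$ centered at $p$; $\mathrm{CH}$ denotes convex hull. *)

theory Defs
  imports "HOL-Analysis.Analysis"
begin

end

theory Submission
  imports Defs
begin

text \<open>Let \<open>x\<close> lie in the convex hull of the balls, so \<open>x\<close> is within \<open>\<alpha>\<close> of a convex
  combination \<open>c = \<Sum> u\<^sub>i p\<^sub>i\<close>. By the parallel-axis identity the weighted mean of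
  \<open>\<parallel>x - p\<^sub>i\<parallel>\<^sup>2\<close> is \<open>\<parallel>x - c\<parallel>\<^sup>2\<close> plus the variance \<open>\<Sum> u\<^sub>i \<parallel>c - p\<^sub>i\<parallel>\<^sup>2\<close>, and the variance
  is half the weighted mean of the pairwise squared distances, hence at most \<open>(\<epsilon>\<alpha>)\<^sup>2/2\<close>.
  Some \<open>\<parallel>x - p\<^sub>i\<parallel>\<^sup>2\<close> is at most the mean, i.e. below \<open>\<alpha>\<^sup>2 (1 + \<epsilon>\<^sup>2/2)\<close>.\<close>

lemma weighted_sum_norm_diff_sq:
  fixes Q :: "'a::real_inner set"
  assumes "sum u Q = 1"
  shows "(\<Sum>y\<in>Q. u y * (norm (x - y))\<^sup>2)
           = (norm (x - (\<Sum>y\<in>Q. u y *\<^sub>R y)))\<^sup>2 + (\<Sum>y\<in>Q. u y * (norm ((\<Sum>y\<in>Q. u y *\<^sub>R y) - y))\<^sup>2)"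
proof -
  define c where "c = (\<Sum>y\<in>Q. u y *\<^sub>R y)"
  have centered: "(\<Sum>y\<in>Q. u y *\<^sub>R (c - y)) = 0"
    by (simp add: scaleR_right_diff_distrib sum_subtractf assms c_def flip: scaleR_left.sum)
  have "(\<Sum>y\<in>Q. u y * ((x - c) \<bullet> (c - y))) = (x - c) \<bullet> (\<Sum>y\<in>Q. u y *\<^sub>R (c - y))"
    by (simp add: inner_sum_right)
  then have cross: "(\<Sum>y\<in>Q. u y * ((x - c) \<bullet> (c - y))) = 0"
    by (simp add: centered)
  have "(\<Sum>y\<in>Q. u y * (norm (x - y))\<^sup>2)
      = (\<Sum>y\<in>Q. u y * (norm (x - c))\<^sup>2 + 2 * (u y * ((x - c) \<bullet> (c - y))) + u y * (norm (c - y))\<^sup>2)"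
    by (intro sum.cong refl) (simp add: power2_norm_eq_inner algebra_simps inner_commute)
  also have "\<dots> = (\<Sum>y\<in>Q. u y) * (norm (x - c))\<^sup>2 + 2 * (\<Sum>y\<in>Q. u y * ((x - c) \<bullet> (c - y)))
        + (\<Sum>y\<in>Q. u y * (norm (c - y))\<^sup>2)"
    by (simp add: sum.distrib sum_distrib_left sum_distrib_right)
  finally show ?thesis
    by (simp add: assms cross flip: c_def)
qed

lemma weighted_variance_le_half_diameter_sq:
  fixes Q :: "'a::real_inner set"
  assumes "\<forall>y\<in>Q. 0 \<le> u y" and "sum u Q = 1"
    and diam: "\<And>a b. a \<in> Q \<Longrightarrow> b \<in> Q \<Longrightarrow> norm (a - b) \<le> D"
  shows "(\<Sum>y\<in>Q. u y * (norm ((\<Sum>y\<in>Q. u y *\<^sub>R y) - y))\<^sup>2) \<le> D\<^sup>2 / 2"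
proof -
  define c where "c = (\<Sum>y\<in>Q. u y *\<^sub>R y)"
  define V where "V = (\<Sum>y\<in>Q. u y * (norm (c - y))\<^sup>2)"
  have "(\<Sum>z\<in>Q. u z * (\<Sum>y\<in>Q. u y * (norm (z - y))\<^sup>2))
      = (\<Sum>z\<in>Q. u z * ((norm (c - z))\<^sup>2 + V))"
    by (simp add: weighted_sum_norm_diff_sq[OF assms(2)] V_def c_def norm_minus_commute)
  also have "\<dots> = 2 * V"
    by (simp add: ring_distribs sum.distrib assms(2) V_def flip: sum_distrib_right)
  finally have pairwise: "(\<Sum>z\<in>Q. u z * (\<Sum>y\<in>Q. u y * (norm (z - y))\<^sup>2)) = 2 * V" .
  have "(\<Sum>z\<in>Q. u z * (\<Sum>y\<in>Q. u y * (norm (z - y))\<^sup>2)) \<le> (\<Sum>z\<in>Q. u z * (\<Sum>y\<in>Q. u y * D\<^sup>2))"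
    using assms(1) diam
    by (intro sum_mono mult_left_mono power_mono) (auto simp: order_trans[OF norm_ge_zero diam])
  also have "\<dots> = D\<^sup>2"
    by (simp add: assms(2) flip: sum_distrib_right)
  finally show ?thesis
    using pairwise by (simp add: V_def c_def)
qed

lemma exists_below_weighted_mean:
  fixes f :: "'b \<Rightarrow> real"
  assumes "\<forall>y\<in>Q. 0 \<le> u y" and "sum u Q = 1" and "(\<Sum>y\<in>Q. u y * f y) < b"
  shows "\<exists>y\<in>Q. f y < b"
proof (rule ccontr)
  assume "\<not> ?thesis"
  then have "(\<Sum>y\<in>Q. u y * b) \<le> (\<Sum>y\<in>Q. u y * f y)"
    using assms(1) by (auto intro!: sum_mono mult_left_mono simp: not_less)
  with assms(2,3) show False
    by (simp flip: sum_distrib_right)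
qed

lemma convex_hull_Union_balls_subset:
  fixes Q :: "'a::real_normed_vector set"
  shows "convex hull (\<Union>q\<in>Q. ball q r) \<subseteq> (\<Union>c\<in>convex hull Q. ball c r)"
proof -
  have Minkowski: "(\<Union>c\<in>convex hull Q. ball c r) = (\<Union>c\<in>convex hull Q. \<Union>v\<in>ball 0 r. {c + v})"
  proof (intro equalityI subsetI)
    fix x assume "x \<in> (\<Union>c\<in>convex hull Q. ball c r)"
    then obtain c where "c \<in> convex hull Q" "x - c \<in> ball 0 r"
      by (auto simp: dist_norm norm_minus_commute)
    then show "x \<in> (\<Union>c\<in>convex hull Q. \<Union>v\<in>ball 0 r. {c + v})"
      by (intro UN_I[of c] UN_I[of "x - c"]) auto
  next
    fix x assume "x \<in> (\<Union>c\<in>convex hull Q. \<Union>v\<in>ball 0 r. {c + v})"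
    then obtain c v where "c \<in> convex hull Q" "v \<in> ball 0 r" "x = c + v"
      by blast
    then show "x \<in> (\<Union>c\<in>convex hull Q. ball c r)"
      by (intro UN_I[of c]) (auto simp: dist_norm)
  qed
  show ?thesis
  proof (rule hull_minimal)
    show "(\<Union>q\<in>Q. ball q r) \<subseteq> (\<Union>c\<in>convex hull Q. ball c r)"
      using hull_inc by fastforce
    show "convex (\<Union>c\<in>convex hull Q. ball c r)"
      unfolding Minkowski by (intro convex_sums convex_convex_hull convex_ball)
  qed
qed

theorem convex_hull_Union_balls_subset_enlarged:
  fixes Q :: "'a::real_inner set"
  assumes "finite Q" and diam: "\<And>a b. a \<in> Q \<Longrightarrow> b \<in> Q \<Longrightarrow> norm (a - b) \<le> D"
  shows "convex hull (\<Union>q\<in>Q. ball q r) \<subseteq> (\<Union>q\<in>Q. ball q (sqrt (r\<^sup>2 + D\<^sup>2 / 2)))"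
proof
  fix x assume "x \<in> convex hull (\<Union>q\<in>Q. ball q r)"
  then have "x \<in> (\<Union>c\<in>convex hull Q. ball c r)"
    using convex_hull_Union_balls_subset by blast
  then obtain c where c: "c \<in> convex hull Q" and "dist c x < r"
    by auto
  obtain u where u: "\<forall>y\<in>Q. 0 \<le> u y" "sum u Q = 1" "(\<Sum>y\<in>Q. u y *\<^sub>R y) = c"
    using c by (auto simp: convex_hull_finite[OF \<open>finite Q\<close>])
  have "(norm (x - c))\<^sup>2 < r\<^sup>2"
    using \<open>dist c x < r\<close> by (simp add: dist_norm norm_minus_commute power_strict_mono)
  then have "(\<Sum>y\<in>Q. u y * (norm (x - y))\<^sup>2) < r\<^sup>2 + D\<^sup>2 / 2"
    using weighted_sum_norm_diff_sq[OF u(2), of x] weighted_variance_le_half_diameter_sq[OF u(1,2) diam]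
    by (simp add: u(3))
  then have "\<exists>q\<in>Q. (norm (x - q))\<^sup>2 < r\<^sup>2 + D\<^sup>2 / 2"
    by (rule exists_below_weighted_mean[OF u(1,2)])
  then obtain q where "q \<in> Q" and "(norm (x - q))\<^sup>2 < r\<^sup>2 + D\<^sup>2 / 2"
    by blast
  then have "dist q x < sqrt (r\<^sup>2 + D\<^sup>2 / 2)"
    by (simp add: dist_norm norm_minus_commute real_less_rsqrt)
  with \<open>q \<in> Q\<close> show "x \<in> (\<Union>q\<in>Q. ball q (sqrt (r\<^sup>2 + D\<^sup>2 / 2)))"
    by auto
qed

theorem proposition25:
  fixes p :: "nat \<Rightarrow> 'a::euclidean_space"
    and k :: nat and \<alpha> \<epsilon> :: real
  assumes "\<alpha> \<ge> 0" and "\<epsilon> \<ge> 0"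
    and "\<And>i j. i \<le> k \<Longrightarrow> j \<le> k \<Longrightarrow> norm (p i - p j) \<le> \<epsilon> * \<alpha>"
  shows "convex hull (\<Union>i\<in>{0..k}. ball (p i) \<alpha>)
           \<subseteq> (\<Union>i\<in>{0..k}. ball (p i) (\<alpha> * sqrt (1 + \<epsilon>\<^sup>2 / 2)))"
proof -
  have radius: "sqrt (\<alpha>\<^sup>2 + (\<epsilon> * \<alpha>)\<^sup>2 / 2) = \<alpha> * sqrt (1 + \<epsilon>\<^sup>2 / 2)"
  proof -
    have "\<alpha>\<^sup>2 + (\<epsilon> * \<alpha>)\<^sup>2 / 2 = \<alpha>\<^sup>2 * (1 + \<epsilon>\<^sup>2 / 2)"
      by (simp add: algebra_simps)
    then show ?thesis
      using \<open>\<alpha> \<ge> 0\<close> by (simp add: real_sqrt_mult)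
  qed
  have "convex hull (\<Union>q\<in>p ` {0..k}. ball q \<alpha>)
          \<subseteq> (\<Union>q\<in>p ` {0..k}. ball q (sqrt (\<alpha>\<^sup>2 + (\<epsilon> * \<alpha>)\<^sup>2 / 2)))"
    using assms(3) by (intro convex_hull_Union_balls_subset_enlarged) auto
  then show ?thesis
    by (simp add: radius image_image)
qed

end
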